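(* Let $H$ be an RB function for $\mathcal X_r$, $\eta\ge\max_{p\in\mathcal Q}H(\mathbf f[p])$, let $\epsilon,\epsilon'>0$, let $H_{\mathrm{thr}}\in\mathbb R$, and let $\mathcal V$ be a $1-\epsilon$ confidence region. Let $\lambda$ be the event consisting of all $(\vec a,\vec x)\in\mathcal A^n\times\mathcal X^n$ with $nH(\mathcal V(\vec a,\vec x,\epsilon))-\nu(\vec x)\eta\ge H_{\mathrm{thr}}$ (the abort outcome $\perp$ is not in $\lambda$). Then for every $n$-round device behavior $P_{A\mid X}$ and input distribution $\Pi$, the distribution $P_{AX}$ is $\epsilon$-close in total variation distance to a distribution $\tilde P_{AX}(\vec a,\vec x)=\tilde P(\vec a\mid\vec x)\Pi(\vec x)$ on $(\mathcal A^n\cup\{\perp\})\times\mathcal X^n$ such that, according to $\tilde P_{AX}$, either (i) $\Pr(\lambda)\le\epsilon'$, or (ii) $H_{\min}(A\mid X;\lambda)\ge H_{\mathrm{thr}}-\log_2\frac1{\epsilon'}$, where $H_{\min}(A\mid X;\lambda)=-\log_2\sum_{\vec x}\tilde P(\vec x\mid\lambda)\max_{\vec a}\tilde P(\vec a\mid\vec x;\lambda)$ (conditional probabilities computed from $\tilde P_{AX}$).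
   Context: Setting. A Bell device consists of $k$ boxes with finite input sets $\mathcal X_i$ and output sets $\mathcal A_i$; $\mathcal X=\prod_i\mathcal X_i$, $\mathcal A=\prod_i\mathcal A_i$. Single-round behaviors $p=(p(a\mid x))_{a,x}$; $\mathcal Q$ the set of quantum behaviors (realizable by a $k$-partite quantum state and local measurements). Bell expression $f$: $f[p]=\sum_{a,x}f(a,x)p(a\mid x)$; fixed $\mathbf f=(f_1,\dots,f_t)$, $\mathbf f[p]\in\mathbb R^t$, $\mathbf f[\mathcal Q]=\{\mathbf f[p]:p\in\mathcal Q\}$. $n$-round device behavior: $P(\vec a\mid\vec x)=\prod_{j=1}^np_{\vec a_{j-1},\vec x_{j-1}}(a_j\mid x_j)$ with each $p_{\vec a_{j-1},\vec x_{j-1}}\in\mathcal Q$, where $\vec a_j,\vec x_j$ are length-$j$ prefixes. Inputs drawn with $\Pi(\vec x)=\prod_j\pi(x_j)$ for a distribution $\pi$ on $\mathcal X$; $P_{AX}(\vec a,\vec x)=P(\vec a\mid\vec x)\Pi(\vec x)$. RB function for nonempty $\mathcal X_r\subseteq\mathcal X$: $H:\mathbf f[\mathcal Q]\to[0,\log_2|\mathcal A|]$ with (1) $\min_{a\in\mathcal A,x\in\mathcal X_r}(-\log_2p(a\mid x))\ge H(\mathbf f[p])$ for all $p\in\mathcal Q$; (2) $H(q\mathbf f[p_1]+(1-q)\mathbf f[p_2])\le qH(\mathbf f[p_1])+(1-q)H(\mathbf f[p_2])$ for $q\in[0,1]$, $p_1,p_2\in\mathcal Q$. For $\mathcal V\subseteq\mathbb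 R^t$, $H(\mathcal V)$ is a fixed number $\le\inf\{H(\mathbf y):\mathbf y\in\mathbf f[\mathcal Q]\cap\mathcal V\}$, and $0$ if the intersection is empty. $\nu(\vec x)=\#\{j:x_j\notin\mathcal X_r\}$. A $1-\epsilon$ confidence region is an assignment $(\vec a,\vec x)\mapsto\mathcal V(\vec a,\vec x,\epsilon)\subseteq\mathbb R^t$ such that for every $n$-round device behavior, $\Pr_{P_{AX}}[\frac1n\sum_{j=1}^n\mathbf f[p_{\vec a_{j-1},\vec x_{j-1}}]\in\mathcal V(\vec a,\vec x,\epsilon)]\ge1-\epsilon$. *)

theory Defs
  imports "HOL-Analysis.Analysis"
begin

text \<open>Global input set = UNIV of the finite type 'x, global output set = UNIV of the
finite type 'a. A single-round behavior p is a function p a x = p(a|x).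
Bell expressions f_1..f_t are bundled into F :: 'a => 'x => real^'t.\<close>

definition behaviors :: "('a::finite \<Rightarrow> 'x::finite \<Rightarrow> real) set" where
  "behaviors = {p. (\<forall>a x. 0 \<le> p a x) \<and> (\<forall>x. (\<Sum>a\<in>UNIV. p a x) = 1)}"

definition convex_behavior_set :: "('a::finite \<Rightarrow> 'x::finite \<Rightarrow> real) set \<Rightarrow> bool" where
  "convex_behavior_set Q \<longleftrightarrow>
     (\<forall>p1\<in>Q. \<forall>p2\<in>Q. \<forall>q\<in>{0..1::real}. (\<lambda>a x. q * p1 a x + (1 - q) * p2 a x) \<in> Q)"

definition bell_val :: "('a::finite \<Rightarrow> 'x::finite \<Rightarrow> real^'t) \<Rightarrow> ('a \<Rightarrow> 'x \<Rightarrow> real) \<Rightarrow> real^'t" where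
  "bell_val F p = (\<Sum>a\<in>UNIV. \<Sum>x\<in>UNIV. p a x *\<^sub>R F a x)"

text \<open>RB function for Xr. Condition (1): min over a and x in Xr of -log2 p(a|x) is at
least H(f[p]), with the convention -log2 0 = +infinity.\<close>
definition RB_function ::
  "('a::finite \<Rightarrow> 'x::finite \<Rightarrow> real) set \<Rightarrow> ('a \<Rightarrow> 'x \<Rightarrow> real^'t) \<Rightarrow> 'x set \<Rightarrow> (real^'t \<Rightarrow> real) \<Rightarrow> bool" where
  "RB_function Q F Xr H \<longleftrightarrow> Xr \<noteq> {} \<and>
     (\<forall>p\<in>Q. 0 \<le> H (bell_val F p) \<and> H (bell_val F p) \<le> log 2 (real CARD('a))) \<and>
     (\<forall>p\<in>Q. \<forall>a. \<forall>x\<in>Xr. p a x > 0 \<longrightarrow> H (bell_val F p) \<le> - log 2 (p a x)) \<and>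
     (\<forall>p1\<in>Q. \<forall>p2\<in>Q. \<forall>q\<in>{0..1::real}.
        H (q *\<^sub>R bell_val F p1 + (1 - q) *\<^sub>R bell_val F p2)
          \<le> q * H (bell_val F p1) + (1 - q) * H (bell_val F p2))"

definition set_extension ::
  "('a::finite \<Rightarrow> 'x::finite \<Rightarrow> real) set \<Rightarrow> ('a \<Rightarrow> 'x \<Rightarrow> real^'t) \<Rightarrow> (real^'t \<Rightarrow> real)
     \<Rightarrow> ((real^'t) set \<Rightarrow> real) \<Rightarrow> bool" where
  "set_extension Q F H HV \<longleftrightarrow>
     (\<forall>V. (\<forall>y \<in> bell_val F ` Q \<inter> V. HV V \<le> H y) \<and>
          (bell_val F ` Q \<inter> V = {} \<longrightarrow> HV V = 0))"

definition seqs :: "nat \<Rightarrow> 'b list set" where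
  "seqs n = {xs. length xs = n}"

definition nu :: "'x set \<Rightarrow> 'x list \<Rightarrow> nat" where
  "nu Xr xs = card {j. j < length xs \<and> xs ! j \<notin> Xr}"

definition is_distribution :: "('x::finite \<Rightarrow> real) \<Rightarrow> bool" where
  "is_distribution \<pi> \<longleftrightarrow> (\<forall>x. 0 \<le> \<pi> x) \<and> (\<Sum>x\<in>UNIV. \<pi> x) = 1"

text \<open>An n-round device behavior: D as xs is the behavior used in the round following
the prefixes as, xs (of equal length < n).\<close>
definition device_behavior ::
  "('a \<Rightarrow> 'x \<Rightarrow> real) set \<Rightarrow> nat \<Rightarrow> ('a list \<Rightarrow> 'x list \<Rightarrow> 'a \<Rightarrow> 'x \<Rightarrow> real) \<Rightarrow> bool" where
  "device_behavior Q n D \<longleftrightarrow>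
     (\<forall>as xs. length as = length xs \<and> length as < n \<longrightarrow> D as xs \<in> Q)"

definition dev_prob :: "('a list \<Rightarrow> 'x list \<Rightarrow> 'a \<Rightarrow> 'x \<Rightarrow> real) \<Rightarrow> nat \<Rightarrow> 'a list \<Rightarrow> 'x list \<Rightarrow> real" where
  "dev_prob D n as xs = (\<Prod>j<n. D (take j as) (take j xs) (as ! j) (xs ! j))"

definition input_prob :: "('x \<Rightarrow> real) \<Rightarrow> nat \<Rightarrow> 'x list \<Rightarrow> real" where
  "input_prob \<pi> n xs = (\<Prod>j<n. \<pi> (xs ! j))"

definition joint_prob ::
  "('a list \<Rightarrow> 'x list \<Rightarrow> 'a \<Rightarrow> 'x \<Rightarrow> real) \<Rightarrow> ('x \<Rightarrow> real) \<Rightarrow> nat \<Rightarrow> 'a list \<Rightarrow> 'x list \<Rightarrow> real" where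
  "joint_prob D \<pi> n as xs = dev_prob D n as xs * input_prob \<pi> n xs"

definition avg_bell ::
  "('a::finite \<Rightarrow> 'x::finite \<Rightarrow> real^'t) \<Rightarrow> ('a list \<Rightarrow> 'x list \<Rightarrow> 'a \<Rightarrow> 'x \<Rightarrow> real) \<Rightarrow> nat
     \<Rightarrow> 'a list \<Rightarrow> 'x list \<Rightarrow> real^'t" where
  "avg_bell F D n as xs = (1 / real n) *\<^sub>R (\<Sum>j<n. bell_val F (D (take j as) (take j xs)))"

definition confidence_region ::
  "('a::finite \<Rightarrow> 'x::finite \<Rightarrow> real) set \<Rightarrow> ('a \<Rightarrow> 'x \<Rightarrow> real^'t) \<Rightarrow> ('x \<Rightarrow> real) \<Rightarrow> nat
     \<Rightarrow> ('a list \<Rightarrow> 'x list \<Rightarrow> real \<Rightarrow> (real^'t) set) \<Rightarrow> real \<Rightarrow> bool" where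
  "confidence_region Q F \<pi> n V \<epsilon> \<longleftrightarrow>
     (\<forall>D. device_behavior Q n D \<longrightarrow>
        (\<Sum>as\<in>seqs n. \<Sum>xs\<in>seqs n.
           if avg_bell F D n as xs \<in> V as xs \<epsilon> then joint_prob D \<pi> n as xs else 0) \<ge> 1 - \<epsilon>)"

text \<open>Conditional distributions Pt(o|xs) on outcomes o in A^n union {bottom}
(None = abort outcome bottom), for each xs in X^n.\<close>
definition cond_dist_abort :: "nat \<Rightarrow> ('a::finite list option \<Rightarrow> 'x::finite list \<Rightarrow> real) \<Rightarrow> bool" where
  "cond_dist_abort n Pt \<longleftrightarrow>
     (\<forall>xs\<in>seqs n. (\<forall>oc. 0 \<le> Pt oc xs) \<and> (\<forall>as. length as \<noteq> n \<longrightarrow> Pt (Some as) xs = 0) \<and>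
        Pt None xs + (\<Sum>as\<in>seqs n. Pt (Some as) xs) = 1)"

text \<open>Total variation distance between P_AX (which gives the abort outcome probability 0)
and Pt_AX(o,xs) = Pt(o|xs) Pi(xs).\<close>
definition tv_dist ::
  "('a::finite list \<Rightarrow> 'x::finite list \<Rightarrow> real) \<Rightarrow> ('a list option \<Rightarrow> 'x list \<Rightarrow> real) \<Rightarrow> ('x \<Rightarrow> real)
     \<Rightarrow> nat \<Rightarrow> real" where
  "tv_dist P Pt \<pi> n = (1/2) * (\<Sum>xs\<in>seqs n.
       \<bar>Pt None xs * input_prob \<pi> n xs\<bar> +
       (\<Sum>as\<in>seqs n. \<bar>P as xs - Pt (Some as) xs * input_prob \<pi> n xs\<bar>))"

definition prob_event ::
  "('a::finite list option \<Rightarrow> 'x::finite list \<Rightarrow> real) \<Rightarrow> ('x \<Rightarrow> real) \<Rightarrow> nat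
     \<Rightarrow> ('a list \<times> 'x list) set \<Rightarrow> real" where
  "prob_event Pt \<pi> n lam = (\<Sum>xs\<in>seqs n. \<Sum>as\<in>seqs n.
       if (as, xs) \<in> lam then Pt (Some as) xs * input_prob \<pi> n xs else 0)"

definition prob_x_and_event ::
  "('a::finite list option \<Rightarrow> 'x::finite list \<Rightarrow> real) \<Rightarrow> ('x \<Rightarrow> real) \<Rightarrow> nat
     \<Rightarrow> ('a list \<times> 'x list) set \<Rightarrow> 'x list \<Rightarrow> real" where
  "prob_x_and_event Pt \<pi> n lam xs = (\<Sum>as\<in>seqs n.
       if (as, xs) \<in> lam then Pt (Some as) xs * input_prob \<pi> n xs else 0)"

definition prob_x_given_event where
  "prob_x_given_event Pt \<pi> n lam xs = prob_x_and_event Pt \<pi> n lam xs / prob_event Pt \<pi> n lam"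

definition prob_a_given_x_event where
  "prob_a_given_x_event Pt \<pi> n lam as xs =
     (if (as, xs) \<in> lam then Pt (Some as) xs * input_prob \<pi> n xs else 0)
       / prob_x_and_event Pt \<pi> n lam xs"

definition Hmin_cond ::
  "('a::finite list option \<Rightarrow> 'x::finite list \<Rightarrow> real) \<Rightarrow> ('x \<Rightarrow> real) \<Rightarrow> nat
     \<Rightarrow> ('a list \<times> 'x list) set \<Rightarrow> real" where
  "Hmin_cond Pt \<pi> n lam = - log 2 (\<Sum>xs\<in>seqs n.
       prob_x_given_event Pt \<pi> n lam xs *
         Max ((\<lambda>as. prob_a_given_x_event Pt \<pi> n lam as xs) ` seqs n))"

end

theory Submission
  imports Defs
begin

text \<open>Abort whenever the average Bell value of the behaviors actually used lies outside the
confidence region; by the confidence property this moves at most \<epsilon> of probability mass.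
Without abort, Jensen's inequality for the convex function H turns the threshold condition
defining \<lambda> into \<Sum>j H(f[p_j]) \<ge> Hthr + \<nu> \<eta>, and the RB property bounds each round
probability by 2^-H(f[p_j]) on Xr and by 2^(\<eta> - H(f[p_j])) off Xr, so every outcome in \<lambda> has
probability at most 2^-Hthr given its inputs. Conditioning on \<lambda>, when Pr(\<lambda>) > \<epsilon>', inflates
this by at most 1/\<epsilon>', which bounds the guessing probability.\<close>

lemma finite_seqs: "finite (seqs n :: 'a::finite list set)"
proof -
  have "seqs n = {xs::'a list. set xs \<subseteq> UNIV \<and> length xs = n}"
    by (auto simp: seqs_def)
  thus ?thesis
    using finite_lists_length_eq[OF finite[of "UNIV :: 'a set"]] by simp
qed

lemma seqs_not_empty: "seqs n \<noteq> {}"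
  by (auto simp: seqs_def intro!: exI[of _ "replicate n undefined"])

lemma seqs_Suc: "seqs (Suc n) = (\<lambda>(l, a :: 'a). l @ [a]) ` (seqs n \<times> UNIV)"
proof (intro equalityI subsetI)
  fix xs :: "'a list" assume "xs \<in> seqs (Suc n)"
  hence "xs = butlast xs @ [last xs]" "length (butlast xs) = n"
    by (auto simp: seqs_def intro: append_butlast_last_id[symmetric])
  thus "xs \<in> (\<lambda>(l, a). l @ [a]) ` (seqs n \<times> UNIV)"
    by (auto simp: seqs_def image_iff intro!: exI[of _ "butlast xs"] exI[of _ "last xs"])
qed (auto simp: seqs_def)

lemma sum_seqs_prod_conditionals:
  fixes g :: "'a::finite list \<Rightarrow> 'a \<Rightarrow> real"
  assumes "\<And>l. length l < n \<Longrightarrow> (\<Sum>a\<in>UNIV. g l a) = 1"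
  shows "(\<Sum>as\<in>seqs n. \<Prod>j<n. g (take j as) (as ! j)) = 1"
  using assms
proof (induction n)
  case 0
  have "seqs 0 = {[] :: 'a list}" by (auto simp: seqs_def)
  thus ?case by simp
next
  case (Suc n)
  have snoc: "(\<Prod>j<Suc n. g (take j (l @ [a])) ((l @ [a]) ! j))
      = (\<Prod>j<n. g (take j l) (l ! j)) * g l a" if "l \<in> seqs n" for l a
  proof -
    have "length l = n" using that by (simp add: seqs_def)
    moreover have "(\<Prod>j<n. g (take j (l @ [a])) ((l @ [a]) ! j)) = (\<Prod>j<n. g (take j l) (l ! j))"
      using \<open>length l = n\<close> by (intro prod.cong) (auto simp: nth_append)
    ultimately show ?thesis by (simp add: nth_append)
  qed
  have "(\<Sum>as\<in>seqs (Suc n). \<Prod>j<Suc n. g (take j as) (as ! j))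
      = (\<Sum>l\<in>seqs n. \<Sum>a\<in>UNIV. \<Prod>j<Suc n. g (take j (l @ [a])) ((l @ [a]) ! j))"
    unfolding seqs_Suc sum.cartesian_product
    by (subst sum.reindex) (auto simp: inj_on_def case_prod_unfold)
  also have "\<dots> = (\<Sum>l\<in>seqs n. (\<Prod>j<n. g (take j l) (l ! j)) * (\<Sum>a\<in>UNIV. g l a))"
    by (intro sum.cong refl) (simp only: snoc sum_distrib_left)
  also have "\<dots> = (\<Sum>l\<in>seqs n. \<Prod>j<n. g (take j l) (l ! j))"
    by (intro sum.cong refl) (simp add: Suc.prems seqs_def)
  finally show ?case using Suc by simp
qed

lemma behavior_le_1:
  assumes "p \<in> behaviors"
  shows "p a x \<le> 1"
proof -
  have "p a x \<le> (\<Sum>a\<in>UNIV. p a x)"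
    by (rule member_le_sum) (use assms in \<open>auto simp: behaviors_def\<close>)
  thus ?thesis using assms by (simp add: behaviors_def)
qed

definition cond_dist :: "nat \<Rightarrow> ('a::finite list \<Rightarrow> 'x::finite list \<Rightarrow> real) \<Rightarrow> bool" where
  "cond_dist n P \<longleftrightarrow> (\<forall>xs\<in>seqs n. (\<forall>as\<in>seqs n. 0 \<le> P as xs) \<and> (\<Sum>as\<in>seqs n. P as xs) = 1)"

lemma cond_dist_dev_prob:
  fixes D :: "'a::finite list \<Rightarrow> 'x::finite list \<Rightarrow> 'a \<Rightarrow> 'x \<Rightarrow> real"
  assumes "Q \<subseteq> behaviors" and "device_behavior Q n D"
  shows "cond_dist n (dev_prob D n)"
  unfolding cond_dist_def
proof (intro ballI conjI)
  fix xs :: "'x list" assume xs: "xs \<in> seqs n"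
  have round_beh: "D l (take (length l) xs) \<in> behaviors" if "length l < n" for l :: "'a list"
    using assms that xs by (auto simp: device_behavior_def seqs_def)
  show "0 \<le> dev_prob D n as xs" if "as \<in> seqs n" for as
    unfolding dev_prob_def
    using round_beh[of "take _ as"] that by (intro prod_nonneg) (auto simp: behaviors_def seqs_def)
  define g where "g l a = D l (take (length l) xs) a (xs ! length l)" for l a
  have "(\<Sum>as\<in>seqs n. \<Prod>j<n. g (take j as) (as ! j)) = 1"
    by (rule sum_seqs_prod_conditionals) (use round_beh in \<open>simp add: g_def behaviors_def\<close>)
  moreover have "(\<Sum>as\<in>seqs n. dev_prob D n as xs) = (\<Sum>as\<in>seqs n. \<Prod>j<n. g (take j as) (as ! j))"
    by (intro sum.cong refl prod.cong) (auto simp: dev_prob_def g_def seqs_def)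
  ultimately show "(\<Sum>as\<in>seqs n. dev_prob D n as xs) = 1" by simp
qed

lemma input_prob_nonneg: "is_distribution \<pi> \<Longrightarrow> 0 \<le> input_prob \<pi> n xs"
  by (simp add: input_prob_def is_distribution_def prod_nonneg)

lemma sum_input_prob: "is_distribution \<pi> \<Longrightarrow> (\<Sum>xs\<in>seqs n. input_prob \<pi> n xs) = 1"
  using sum_seqs_prod_conditionals[of n "\<lambda>_ x. \<pi> x"]
  by (simp add: input_prob_def is_distribution_def)

lemma bell_val_convex_comb:
  "bell_val F (\<lambda>a x. u * p1 a x + v * p2 a x) = u *\<^sub>R bell_val F p1 + v *\<^sub>R bell_val F p2"
  by (simp add: bell_val_def scaleR_add_left sum.distrib scaleR_sum_right)

lemma convex_bell_val_image:
  assumes "convex_behavior_set Q"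
  shows "convex (bell_val F ` Q)"
proof (rule convexI)
  fix y1 y2 and u v :: real
  assume "y1 \<in> bell_val F ` Q" "y2 \<in> bell_val F ` Q" "0 \<le> u" "0 \<le> v" "u + v = 1"
  then obtain p1 p2 where p: "p1 \<in> Q" "p2 \<in> Q" "y1 = bell_val F p1" "y2 = bell_val F p2"
    and v: "v = 1 - u" and u: "u \<in> {0..1}" by auto
  have "(\<lambda>a x. u * p1 a x + v * p2 a x) \<in> Q"
    using assms p(1,2) u unfolding convex_behavior_set_def v by blast
  moreover have "u *\<^sub>R y1 + v *\<^sub>R y2 = bell_val F (\<lambda>a x. u * p1 a x + v * p2 a x)"
    unfolding p(3,4) bell_val_convex_comb ..
  ultimately show "u *\<^sub>R y1 + v *\<^sub>R y2 \<in> bell_val F ` Q" by simp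
qed

lemma RB_function_convex_on:
  assumes "convex_behavior_set Q" and "RB_function Q F Xr H"
  shows "convex_on (bell_val F ` Q) H"
  unfolding convex_on_def
proof (intro conjI ballI allI impI)
  show "convex (bell_val F ` Q)" using assms(1) by (rule convex_bell_val_image)
  fix y1 y2 and u v :: real
  assume "y1 \<in> bell_val F ` Q" "y2 \<in> bell_val F ` Q" "0 \<le> u" "0 \<le> v" "u + v = 1"
  then obtain p1 p2 where p: "p1 \<in> Q" "p2 \<in> Q" "y1 = bell_val F p1" "y2 = bell_val F p2"
    and v: "v = 1 - u" and u: "u \<in> {0..1}" by auto
  have "\<forall>p1\<in>Q. \<forall>p2\<in>Q. \<forall>q\<in>{0..1::real}.
        H (q *\<^sub>R bell_val F p1 + (1 - q) *\<^sub>R bell_val F p2)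
          \<le> q * H (bell_val F p1) + (1 - q) * H (bell_val F p2)"
    using assms(2) unfolding RB_function_def by (elim conjE)
  thus "H (u *\<^sub>R y1 + v *\<^sub>R y2) \<le> u * H y1 + v * H y2"
    using p(1,2) u unfolding p(3,4) v by blast
qed

text \<open>Outside Xr the RB property gives nothing; there the trivial bound p(a|x) \<le> 1
is charged to the maximal rate \<eta>.\<close>
lemma behavior_le_powr_RB:
  assumes "Q \<subseteq> behaviors" and "RB_function Q F Xr H"
    and "\<forall>p\<in>Q. H (bell_val F p) \<le> \<eta>" and "p \<in> Q"
  shows "p a x \<le> 2 powr ((if x \<in> Xr then 0 else \<eta>) - H (bell_val F p))"
proof (cases "x \<in> Xr \<and> 0 < p a x")
  case True
  with assms(2,4) have "H (bell_val F p) \<le> - log 2 (p a x)"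
    unfolding RB_function_def by blast
  hence "2 powr (log 2 (p a x)) \<le> 2 powr (- H (bell_val F p))" by simp
  thus ?thesis using True by simp
next
  case False
  have p_beh: "p \<in> behaviors" using assms(1,4) by blast
  show ?thesis
  proof (cases "x \<in> Xr")
    case True
    with False p_beh have "p a x = 0" by (simp add: behaviors_def not_less order_antisym)
    thus ?thesis by simp
  next
    case False
    have "p a x \<le> 1" using p_beh by (rule behavior_le_1)
    also have "1 \<le> 2 powr (\<eta> - H (bell_val F p))"
      using assms(3,4) by (simp add: ge_one_powr_ge_zero)
    finally show ?thesis using False by simp
  qed
qed

lemma sum_rounds_outside_eq_nu:
  assumes "length xs = n"
  shows "(\<Sum>j<n. if xs ! j \<in> Xr then 0 else c) = real (nu Xr xs) * c"
proof -
  have "(\<Sum>j<n. if xs ! j \<in> Xr then 0 else c) = (\<Sum>j\<in>{j\<in>{..<n}. xs ! j \<notin> Xr}. c)"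
    by (subst sum.inter_filter) (auto intro: sum.cong)
  also have "{j\<in>{..<n}. xs ! j \<notin> Xr} = {j. j < length xs \<and> xs ! j \<notin> Xr}"
    using assms by auto
  finally show ?thesis by (simp add: nu_def)
qed

lemma dev_prob_le_powr:
  assumes Q_beh: "Q \<subseteq> behaviors"
    and Q_convex: "convex_behavior_set Q"
    and RB: "RB_function Q F Xr H"
    and HV: "set_extension Q F H HV"
    and eta: "\<forall>p\<in>Q. H (bell_val F p) \<le> \<eta>"
    and n: "n > 0"
    and dev: "device_behavior Q n D"
    and as: "as \<in> seqs n" and xs: "xs \<in> seqs n"
    and avg_in: "avg_bell F D n as xs \<in> Vs"
  shows "dev_prob D n as xs \<le> 2 powr (real (nu Xr xs) * \<eta> - real n * HV Vs)"
proof -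
  define ps where "ps j = D (take j as) (take j xs)" for j
  define h where "h j = H (bell_val F (ps j))" for j
  have lengths: "length as = n" "length xs = n" using as xs by (auto simp: seqs_def)
  have ps_Q: "ps j \<in> Q" if "j < n" for j
    using dev that lengths by (auto simp: ps_def device_behavior_def)
  have weights: "(\<Sum>j<n. 1 / real n) = 1" using n by simp
  have avg: "avg_bell F D n as xs = (\<Sum>j<n. (1 / real n) *\<^sub>R bell_val F (ps j))"
    by (simp add: avg_bell_def ps_def scaleR_sum_right)
  have "avg_bell F D n as xs \<in> bell_val F ` Q"
    unfolding avg using ps_Q weights
    by (intro convex_sum convex_bell_val_image[OF Q_convex]) auto
  hence "HV Vs \<le> H (avg_bell F D n as xs)"
    using HV avg_in unfolding set_extension_def by blast
  also have "\<dots> \<le> (\<Sum>j<n. (1 / real n) * h j)"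
    unfolding avg h_def using n ps_Q weights
    by (intro convex_on_sum[OF _ _ RB_function_convex_on[OF Q_convex RB]]) auto
  finally have n_HV: "real n * HV Vs \<le> (\<Sum>j<n. h j)"
    using n by (simp add: sum_divide_distrib[symmetric] field_simps)
  have "dev_prob D n as xs = (\<Prod>j<n. ps j (as ! j) (xs ! j))"
    by (simp add: dev_prob_def ps_def)
  also have "\<dots> \<le> (\<Prod>j<n. 2 powr ((if xs ! j \<in> Xr then 0 else \<eta>) - h j))"
    using ps_Q Q_beh unfolding h_def
    by (intro prod_mono conjI behavior_le_powr_RB[OF Q_beh RB eta])
      (auto simp: behaviors_def subset_iff)
  also have "\<dots> = 2 powr (\<Sum>j<n. (if xs ! j \<in> Xr then 0 else \<eta>) - h j)"
    by (simp add: powr_sum)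
  also have "\<dots> = 2 powr (real (nu Xr xs) * \<eta> - (\<Sum>j<n. h j))"
    by (simp add: sum_subtractf sum_rounds_outside_eq_nu lengths)
  also have "\<dots> \<le> 2 powr (real (nu Xr xs) * \<eta> - real n * HV Vs)"
    using n_HV by simp
  finally show ?thesis .
qed

definition abort_unless ::
  "nat \<Rightarrow> ('a list \<Rightarrow> 'x list \<Rightarrow> bool) \<Rightarrow> ('a list \<Rightarrow> 'x list \<Rightarrow> real) \<Rightarrow> 'a list option \<Rightarrow> 'x list \<Rightarrow> real"
where
  "abort_unless n G P oc xs = (case oc of
      None \<Rightarrow> 1 - (\<Sum>as\<in>seqs n. if G as xs then P as xs else 0)
    | Some as \<Rightarrow> if as \<in> seqs n \<and> G as xs then P as xs else 0)"

lemma sum_kept_le_1: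
  assumes "cond_dist n P" and "xs \<in> seqs n"
  shows "(\<Sum>as\<in>seqs n. if G as xs then P as xs else 0) \<le> 1"
proof -
  have "(\<Sum>as\<in>seqs n. if G as xs then P as xs else 0) \<le> (\<Sum>as\<in>seqs n. P as xs)"
    using assms by (intro sum_mono) (auto simp: cond_dist_def)
  thus ?thesis using assms by (simp add: cond_dist_def)
qed

lemma cond_dist_abort_unless:
  fixes P :: "'a::finite list \<Rightarrow> 'x::finite list \<Rightarrow> real"
  assumes "cond_dist n P"
  shows "cond_dist_abort n (abort_unless n G P)"
  unfolding cond_dist_abort_def
proof (intro ballI conjI allI impI)
  fix xs :: "'x list" assume xs: "xs \<in> seqs n"
  show "0 \<le> abort_unless n G P oc xs" for oc
    using assms xs sum_kept_le_1[OF assms xs, of G]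
    by (cases oc) (auto simp: abort_unless_def cond_dist_def)
  show "abort_unless n G P (Some as) xs = 0" if "length as \<noteq> n" for as
    using that by (simp add: abort_unless_def seqs_def)
  have "(\<Sum>as\<in>seqs n. abort_unless n G P (Some as) xs) = (\<Sum>as\<in>seqs n. if G as xs then P as xs else 0)"
    by (intro sum.cong) (simp_all add: abort_unless_def)
  thus "abort_unless n G P None xs + (\<Sum>as\<in>seqs n. abort_unless n G P (Some as) xs) = 1"
    by (simp add: abort_unless_def)
qed

text \<open>Redirecting the outcomes outside G to the abort outcome moves exactly the mass of
the complement of G, and the total variation distance counts it twice.\<close>
lemma tv_dist_abort_unless:
  assumes P: "cond_dist n P" and pi: "is_distribution \<pi>"
  shows "tv_dist (\<lambda>as xs. P as xs * input_prob \<pi> n xs) (abort_unless n G P) \<pi> n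
       = 1 - (\<Sum>xs\<in>seqs n. \<Sum>as\<in>seqs n. if G as xs then P as xs * input_prob \<pi> n xs else 0)"
proof -
  define ip where "ip = input_prob \<pi> n"
  define kept where "kept xs = (\<Sum>as\<in>seqs n. if G as xs then P as xs * ip xs else 0)" for xs
  have per_input: "\<bar>abort_unless n G P None xs * ip xs\<bar>
      + (\<Sum>as\<in>seqs n. \<bar>P as xs * ip xs - abort_unless n G P (Some as) xs * ip xs\<bar>)
      = 2 * (ip xs - kept xs)" if xs: "xs \<in> seqs n" for xs
  proof -
    have P_xs: "\<forall>as\<in>seqs n. 0 \<le> P as xs" "(\<Sum>as\<in>seqs n. P as xs) = 1"
      using P xs by (auto simp: cond_dist_def)
    have ip: "0 \<le> ip xs" using pi by (simp add: ip_def input_prob_nonneg)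
    have lost: "(\<Sum>as\<in>seqs n. \<bar>P as xs * ip xs - abort_unless n G P (Some as) xs * ip xs\<bar>)
        = (\<Sum>as\<in>seqs n. if G as xs then 0 else P as xs * ip xs)"
      using P_xs(1) ip by (intro sum.cong) (auto simp: abort_unless_def)
    have "kept xs + (\<Sum>as\<in>seqs n. if G as xs then 0 else P as xs * ip xs)
        = (\<Sum>as\<in>seqs n. P as xs) * ip xs"
      unfolding kept_def sum.distrib[symmetric] sum_distrib_right by (intro sum.cong) auto
    hence lost_eq: "(\<Sum>as\<in>seqs n. if G as xs then 0 else P as xs * ip xs) = ip xs - kept xs"
      using P_xs(2) by simp
    have "(\<Sum>as\<in>seqs n. if G as xs then P as xs else 0) * ip xs = kept xs"
      unfolding kept_def sum_distrib_right by (intro sum.cong) auto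
    hence "abort_unless n G P None xs * ip xs = ip xs - kept xs"
      by (simp add: abort_unless_def left_diff_distrib)
    moreover have "0 \<le> ip xs - kept xs"
      unfolding lost_eq[symmetric] using P_xs(1) ip by (intro sum_nonneg) auto
    ultimately show ?thesis using lost lost_eq by simp
  qed
  have "tv_dist (\<lambda>as xs. P as xs * ip xs) (abort_unless n G P) \<pi> n
      = (1 / 2) * (\<Sum>xs\<in>seqs n. 2 * (ip xs - kept xs))"
    by (simp add: tv_dist_def ip_def[symmetric] per_input cong: sum.cong)
  also have "\<dots> = (\<Sum>xs\<in>seqs n. ip xs - kept xs)"
    by (simp only: sum_distrib_left[symmetric])
  also have "\<dots> = 1 - (\<Sum>xs\<in>seqs n. kept xs)"
    using pi by (simp add: sum_subtractf ip_def sum_input_prob)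
  finally show ?thesis unfolding ip_def kept_def .
qed

lemma sum_times_Max_normalized:
  fixes w :: "'b \<Rightarrow> real"
  assumes "finite S" and "S \<noteq> {}" and "\<forall>s\<in>S. 0 \<le> w s"
  shows "(\<Sum>s\<in>S. w s) / L * Max ((\<lambda>s. w s / (\<Sum>s\<in>S. w s)) ` S) = Max (w ` S) / L"
proof (cases "(\<Sum>s\<in>S. w s) = 0")
  case True
  hence "w ` S = {0}" using assms by (auto simp: sum_nonneg_eq_0_iff)
  thus ?thesis using True by simp
next
  case False
  moreover have "0 \<le> (\<Sum>s\<in>S. w s)" using assms(3) by (simp add: sum_nonneg)
  ultimately have pos: "0 < (\<Sum>s\<in>S. w s)" by linarith
  have "Max ((\<lambda>s. w s / (\<Sum>s\<in>S. w s)) ` S) = Max ((\<lambda>y. y / (\<Sum>s\<in>S. w s)) ` w ` S)"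
    by (simp add: image_image)
  also have "\<dots> = Max (w ` S) / (\<Sum>s\<in>S. w s)"
    using assms pos by (intro mono_Max_commute[symmetric]) (auto simp: mono_def divide_right_mono)
  finally show ?thesis using pos by simp
qed

text \<open>The guessing probability is \<Sum>xs Max_as Pt(as, xs; \<lambda>) / Pt(\<lambda>); each maximum is at most
c Pi(xs), so it is at most c / Pt(\<lambda>).\<close>
lemma Hmin_cond_ge:
  assumes Pt: "cond_dist_abort n Pt" and pi: "is_distribution \<pi>"
    and lam: "lam \<subseteq> seqs n \<times> seqs n"
    and bound: "\<And>as xs. (as, xs) \<in> lam \<Longrightarrow> Pt (Some as) xs \<le> c"
    and c: "c > 0" and \<delta>: "\<delta> > 0" and large: "prob_event Pt \<pi> n lam > \<delta>"
  shows "Hmin_cond Pt \<pi> n lam \<ge> - log 2 c - log 2 (1 / \<delta>)"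
proof -
  define w where "w as xs = (if (as, xs) \<in> lam then Pt (Some as) xs * input_prob \<pi> n xs else 0)"
    for as xs
  define PL where "PL = prob_event Pt \<pi> n lam"
  define guess where "guess = (\<Sum>xs\<in>seqs n. Max ((\<lambda>as. w as xs) ` seqs n))"
  have fin: "finite (seqs n :: 'a list set)" by (rule finite_seqs)
  have w_nonneg: "0 \<le> w as xs" for as xs
    using Pt lam input_prob_nonneg[OF pi] by (auto simp: w_def cond_dist_abort_def)
  have w_le: "w as xs \<le> c * input_prob \<pi> n xs" for as xs
    using bound c input_prob_nonneg[OF pi]
    by (auto simp: w_def intro: mult_right_mono)
  have PL_pos: "PL > 0" using large \<delta> by (simp add: PL_def)
  have "prob_x_given_event Pt \<pi> n lam xs * Max ((\<lambda>as. prob_a_given_x_event Pt \<pi> n lam as xs) ` seqs n)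
      = Max ((\<lambda>as. w as xs) ` seqs n) / PL" for xs
    unfolding prob_x_given_event_def prob_a_given_x_event_def prob_x_and_event_def
      w_def[symmetric] PL_def[symmetric]
    using w_nonneg by (intro sum_times_Max_normalized[OF fin seqs_not_empty]) simp
  hence Hmin_eq: "Hmin_cond Pt \<pi> n lam = - log 2 (guess / PL)"
    by (simp add: Hmin_cond_def guess_def sum_divide_distrib)
  have "guess \<le> (\<Sum>xs\<in>seqs n. c * input_prob \<pi> n xs)"
    unfolding guess_def by (intro sum_mono) (simp add: fin seqs_not_empty w_le)
  also have "\<dots> = c" using pi by (simp add: sum_distrib_left[symmetric] sum_input_prob)
  finally have guess_le: "guess \<le> c" .
  obtain as xs where as_xs: "as \<in> seqs n" "xs \<in> seqs n" "0 < w as xs"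
  proof (rule ccontr)
    assume "\<not> thesis"
    hence "\<forall>xs\<in>seqs n. \<forall>as\<in>seqs n. w as xs \<le> 0" using that by (meson not_le)
    hence "PL \<le> 0" by (simp add: PL_def prob_event_def w_def[symmetric] sum_nonpos)
    thus False using PL_pos by simp
  qed
  have Max_nonneg: "0 \<le> Max ((\<lambda>as. w as xs') ` seqs n)" for xs'
  proof -
    obtain as' :: "'a list" where "as' \<in> seqs n" using seqs_not_empty by blast
    thus ?thesis using fin w_nonneg[of as' xs'] by (intro order.trans[OF _ Max_ge]) auto
  qed
  have "0 < Max ((\<lambda>as. w as xs) ` seqs n)"
    using as_xs fin by (subst Max_gr_iff) auto
  hence guess_pos: "0 < guess"
    unfolding guess_def using Max_nonneg by (intro sum_pos2[OF finite_seqs as_xs(2)]) auto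
  have "log 2 (guess / PL) \<le> log 2 (c / \<delta>)"
    using guess_pos guess_le PL_pos large c \<delta> by (simp add: PL_def frac_le)
  also have "\<dots> = log 2 c + log 2 (1 / \<delta>)"
    using c \<delta> by (simp add: log_divide)
  finally show ?thesis using Hmin_eq by simp
qed

theorem theorem1:
  fixes Q :: "('a::finite \<Rightarrow> 'x::finite \<Rightarrow> real) set"
    and F :: "'a \<Rightarrow> 'x \<Rightarrow> real^'t"
    and Xr :: "'x set"
    and H :: "real^'t \<Rightarrow> real"
    and HV :: "(real^'t) set \<Rightarrow> real"
    and \<eta> \<epsilon> \<epsilon>' Hthr :: real
    and n :: nat
    and \<pi> :: "'x \<Rightarrow> real"
    and V :: "'a list \<Rightarrow> 'x list \<Rightarrow> real \<Rightarrow> (real^'t) set"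
    and D :: "'a list \<Rightarrow> 'x list \<Rightarrow> 'a \<Rightarrow> 'x \<Rightarrow> real"
  assumes Q_beh: "Q \<subseteq> behaviors"
    and Q_convex: "convex_behavior_set Q"
    and RB: "RB_function Q F Xr H"
    and HV: "set_extension Q F H HV"
    and eta: "\<forall>p\<in>Q. H (bell_val F p) \<le> \<eta>"
    and eps: "\<epsilon> > 0" and eps': "\<epsilon>' > 0"
    and n: "n > 0"
    and pi: "is_distribution \<pi>"
    and CR: "confidence_region Q F \<pi> n V \<epsilon>"
    and dev: "device_behavior Q n D"
  shows "\<exists>Pt :: 'a list option \<Rightarrow> 'x list \<Rightarrow> real.
           cond_dist_abort n Pt \<and>
           tv_dist (joint_prob D \<pi> n) Pt \<pi> n \<le> \<epsilon> \<and>
           (let lam = {(as, xs). as \<in> seqs n \<and> xs \<in> seqs n \<and>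
                         real n * HV (V as xs \<epsilon>) - real (nu Xr xs) * \<eta> \<ge> Hthr}
            in prob_event Pt \<pi> n lam \<le> \<epsilon>' \<or>
               Hmin_cond Pt \<pi> n lam \<ge> Hthr - log 2 (1 / \<epsilon>'))"
proof -
  define G where "G as xs \<longleftrightarrow> avg_bell F D n as xs \<in> V as xs \<epsilon>" for as xs
  define Pt where "Pt = abort_unless n G (dev_prob D n)"
  define lam where "lam = {(as, xs). as \<in> seqs n \<and> xs \<in> seqs n \<and>
                         real n * HV (V as xs \<epsilon>) - real (nu Xr xs) * \<eta> \<ge> Hthr}"
  have P: "cond_dist n (dev_prob D n)" using Q_beh dev by (rule cond_dist_dev_prob)
  have CD: "cond_dist_abort n Pt" unfolding Pt_def using P by (rule cond_dist_abort_unless)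
  have "1 - \<epsilon> \<le> (\<Sum>as\<in>seqs n. \<Sum>xs\<in>seqs n. if G as xs then dev_prob D n as xs * input_prob \<pi> n xs else 0)"
    using CR dev unfolding confidence_region_def G_def joint_prob_def by blast
  hence "1 - \<epsilon> \<le> (\<Sum>xs\<in>seqs n. \<Sum>as\<in>seqs n. if G as xs then dev_prob D n as xs * input_prob \<pi> n xs else 0)"
    by (subst sum.swap)
  hence TV: "tv_dist (joint_prob D \<pi> n) Pt \<pi> n \<le> \<epsilon>"
    using tv_dist_abort_unless[OF P pi, of G] by (simp add: Pt_def joint_prob_def[abs_def])
  have bound: "Pt (Some as) xs \<le> 2 powr - Hthr" if "(as, xs) \<in> lam" for as xs
  proof (cases "G as xs")
    case True
    with that have "dev_prob D n as xs \<le> 2 powr (real (nu Xr xs) * \<eta> - real n * HV (V as xs \<epsilon>))"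
      by (intro dev_prob_le_powr[OF Q_beh Q_convex RB HV eta n dev]) (auto simp: lam_def G_def)
    also have "\<dots> \<le> 2 powr - Hthr" using that by (simp add: lam_def)
    finally show ?thesis by (simp add: Pt_def abort_unless_def)
  qed (simp add: Pt_def abort_unless_def)
  have "lam \<subseteq> seqs n \<times> seqs n" by (auto simp: lam_def)
  from Hmin_cond_ge[OF CD pi this bound _ eps']
  have "prob_event Pt \<pi> n lam \<le> \<epsilon>' \<or> Hmin_cond Pt \<pi> n lam \<ge> Hthr - log 2 (1 / \<epsilon>')"
    by force
  thus ?thesis using CD TV unfolding Let_def lam_def[symmetric] by blast
qed

end
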